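(* There exists a countable, connected, locally finite graph $G$ with a vertex $v$ such that $G$ has 2-distinguishing density zero at $v$, but $G$ does not have 2-distinguishing density zero; in fact there is a vertex $v'$ of $G$ such that no 2-distinguishing coloring $l$ of $G$ satisfies $\delta_{v'}(l)=0$.
   Context: All graphs are simple with vertex set $V$; $d$ is the graph distance and $B_x(r)=\{y\in V: d(x,y)\le r\}$. A 2-coloring $l:V\to\{\text{blue},\text{red}\}$ is 2-distinguishing if the only automorphism $g$ of $G$ with $l(g(x))=l(x)$ for all $x$ is the identity. For $W\subseteq V$ and $x\in V$, $\delta_x(W):=\lim_{n\to\infty}\frac{|B_x(n)\cap W|}{|B_x(n)|}$ if the limit exists (finite/infinite $=0$, infinite/infinite undefined); if $\delta_x(W)$ exists for all $x$, $\delta(W):=\sup_x\delta_x(W)$. For a 2-coloring $l$ with color classes $V_{\text{blue}},V_{\text{red}}$: $\delta_x(l):=\min\{\delta_x(V_{\text{blue}}),\delta_x(V_{\text{red}})\}$, $\delta(l):=\min\{\delta(V_{\text{blue}}),\delta(V_{\text{red}})\}$. $G$ has 2-distinguishing density zero at $x$ if some 2-distinguishing coloring $l$ has $\delta_x(l)=0$, and has 2-distinguishing density zero if some 2-distinguishing coloring $l$ has $\delta(l)=0$. *)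

theory Defs
  imports Complex_Main "HOL-Library.Countable_Set"
begin

text \<open>Vertices are natural numbers
(every countable graph is isomorphic to one on a subset of nat).\<close>

definition simple_graph :: "'a set \<Rightarrow> ('a \<times> 'a) set \<Rightarrow> bool" where
  "simple_graph V E \<longleftrightarrow> E \<subseteq> V \<times> V \<and> sym E \<and> (\<forall>x. (x, x) \<notin> E)"

definition connected_graph :: "'a set \<Rightarrow> ('a \<times> 'a) set \<Rightarrow> bool" where
  "connected_graph V E \<longleftrightarrow> (\<forall>x\<in>V. \<forall>y\<in>V. (x, y) \<in> E\<^sup>*)"

definition locally_finite :: "'a set \<Rightarrow> ('a \<times> 'a) set \<Rightarrow> bool" where
  "locally_finite V E \<longleftrightarrow> (\<forall>x\<in>V. finite {y. (x, y) \<in> E})"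

definition ball_graph :: "'a set \<Rightarrow> ('a \<times> 'a) set \<Rightarrow> 'a \<Rightarrow> nat \<Rightarrow> 'a set" where
  "ball_graph V E x n = {y \<in> V. \<exists>k\<le>n. (x, y) \<in> E ^^ k}"

definition automorphism :: "'a set \<Rightarrow> ('a \<times> 'a) set \<Rightarrow> ('a \<Rightarrow> 'a) \<Rightarrow> bool" where
  "automorphism V E g \<longleftrightarrow> bij_betw g V V \<and>
     (\<forall>x\<in>V. \<forall>y\<in>V. (x, y) \<in> E \<longleftrightarrow> (g x, g y) \<in> E)"

text \<open>A 2-coloring is l :: 'a => bool (True = blue, False = red).
  It is 2-distinguishing iff the only color-preserving automorphism is the identity.\<close>
definition distinguishing :: "'a set \<Rightarrow> ('a \<times> 'a) set \<Rightarrow> ('a \<Rightarrow> bool) \<Rightarrow> bool" where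
  "distinguishing V E l \<longleftrightarrow>
     (\<forall>g. automorphism V E g \<and> (\<forall>x\<in>V. l (g x) = l x) \<longrightarrow> (\<forall>x\<in>V. g x = x))"

definition density_seq :: "'a set \<Rightarrow> ('a \<times> 'a) set \<Rightarrow> 'a \<Rightarrow> 'a set \<Rightarrow> nat \<Rightarrow> real" where
  "density_seq V E x W n = real (card (ball_graph V E x n \<inter> W)) / real (card (ball_graph V E x n))"

definition color_class :: "'a set \<Rightarrow> ('a \<Rightarrow> bool) \<Rightarrow> bool \<Rightarrow> 'a set" where
  "color_class V l c = {x \<in> V. l x = c}"

definition density_zero_at_col :: "'a set \<Rightarrow> ('a \<times> 'a) set \<Rightarrow> 'a \<Rightarrow> ('a \<Rightarrow> bool) \<Rightarrow> bool" where
  "density_zero_at_col V E x l \<longleftrightarrow>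
     (\<exists>a b. density_seq V E x (color_class V l True) \<longlonglongrightarrow> a \<and>
            density_seq V E x (color_class V l False) \<longlonglongrightarrow> b \<and> min a b = 0)"

definition density_zero_col :: "'a set \<Rightarrow> ('a \<times> 'a) set \<Rightarrow> ('a \<Rightarrow> bool) \<Rightarrow> bool" where
  "density_zero_col V E l \<longleftrightarrow>
     (\<forall>x\<in>V. convergent (density_seq V E x (color_class V l True)) \<and>
             convergent (density_seq V E x (color_class V l False))) \<and>
     min (SUP x\<in>V. lim (density_seq V E x (color_class V l True)))
         (SUP x\<in>V. lim (density_seq V E x (color_class V l False))) = 0"

definition dist_density_zero_at :: "'a set \<Rightarrow> ('a \<times> 'a) set \<Rightarrow> 'a \<Rightarrow> bool" where
  "dist_density_zero_at V E x \<longleftrightarrow> (\<exists>l. distinguishing V E l \<and> density_zero_at_col V E x l)"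

definition dist_density_zero :: "'a set \<Rightarrow> ('a \<times> 'a) set \<Rightarrow> bool" where
  "dist_density_zero V E \<longleftrightarrow> (\<exists>l. distinguishing V E l \<and> density_zero_col V E l)"

end

theory Submission
  imports Defs "HOL-Library.Countable"
begin

text \<open>
  The graph has two sides, hanging from the roots \<open>root True\<close> and \<open>root False\<close> of a
  common hub.  Level \<open>k + 1\<close> of a side has \<open>2 ^ m - 1\<close> vertices when level \<open>k\<close> has \<open>m\<close>,
  each joined to a different nonempty set of vertices of level \<open>k\<close>; so every level is
  larger than everything below it, and the graph is almost rigid.  On side \<open>True\<close> the
  vertices from level 2 on come in pairs of twins, which any distinguishing colouring
  must colour differently; hence around \<open>root True\<close> both colours occupy a tenth of
  every ball, and \<open>root True\<close> is the vertex \<open>v'\<close>.  Around \<open>root False\<close> the ball of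
  radius \<open>n\<close> reaches level \<open>n\<close> of side \<open>False\<close> but only level \<open>n - 2\<close> of side \<open>True\<close>,
  so colouring one twin of each pair (and a bounded number of further vertices) blue
  and everything else red gives a distinguishing colouring whose blue density at
  \<open>root False\<close> tends to 0.  An injection into \<open>nat\<close> transports the example.
\<close>

section \<open>Relabelling vertices\<close>

lemma map_prod_image_mem_iff:
  "inj f \<Longrightarrow> (f x, f y) \<in> map_prod f f ` E \<longleftrightarrow> (x, y) \<in> E"
  by (auto dest: injD)

lemma relpow_map_prod_image_iff:
  assumes "inj f"
  shows "(f x, f y) \<in> (map_prod f f ` E) ^^ n \<longleftrightarrow> (x, y) \<in> E ^^ n"
proof (induction n arbitrary: y)
  case 0
  show ?case using assms by (auto dest: injD)
next
  case (Suc n)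
  have "(f x, f y) \<in> (map_prod f f ` E) ^^ Suc n \<longleftrightarrow>
        (\<exists>z. (f x, f z) \<in> (map_prod f f ` E) ^^ n \<and> (f z, f y) \<in> map_prod f f ` E)"
    unfolding relpow.simps(2) relcomp_unfold by (auto simp: image_iff) (metis map_prod_simp)
  also have "\<dots> \<longleftrightarrow> (x, y) \<in> E ^^ Suc n"
    using Suc.IH map_prod_image_mem_iff[OF assms] by auto
  finally show ?case .
qed

lemma simple_graph_image:
  assumes "inj f" "simple_graph V E"
  shows "simple_graph (f ` V) (map_prod f f ` E)"
  using assms unfolding simple_graph_def sym_def by (auto dest: injD)

lemma connected_graph_image:
  assumes "inj f" "connected_graph V E"
  shows "connected_graph (f ` V) (map_prod f f ` E)"
  unfolding connected_graph_def
proof (intro ballI)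
  fix x y assume "x \<in> f ` V" "y \<in> f ` V"
  then obtain a b where "a \<in> V" "b \<in> V" and xy: "x = f a" "y = f b" by blast
  then obtain k where "(a, b) \<in> E ^^ k"
    using assms(2) rtrancl_power unfolding connected_graph_def by blast
  then show "(x, y) \<in> (map_prod f f ` E)\<^sup>*"
    unfolding xy by (meson assms(1) relpow_imp_rtrancl relpow_map_prod_image_iff)
qed

lemma locally_finite_image:
  assumes "inj f" "locally_finite V E"
  shows "locally_finite (f ` V) (map_prod f f ` E)"
  unfolding locally_finite_def
proof
  fix x assume "x \<in> f ` V"
  then obtain a where "a \<in> V" "x = f a" by blast
  then have "{y. (x, y) \<in> map_prod f f ` E} = f ` {y. (a, y) \<in> E}"
    using assms(1) by (auto dest: injD)
  then show "finite {y. (x, y) \<in> map_prod f f ` E}"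
    using assms(2) \<open>a \<in> V\<close> unfolding locally_finite_def by simp
qed

lemma ball_graph_image:
  assumes "inj f"
  shows "ball_graph (f ` V) (map_prod f f ` E) (f x) n = f ` ball_graph V E x n"
  unfolding ball_graph_def by (force simp: relpow_map_prod_image_iff[OF assms])

lemma density_seq_image:
  assumes "inj f"
  shows "density_seq (f ` V) (map_prod f f ` E) (f x) (f ` W) = density_seq V E x W"
proof
  fix n
  show "density_seq (f ` V) (map_prod f f ` E) (f x) (f ` W) n = density_seq V E x W n"
    unfolding density_seq_def ball_graph_image[OF assms] image_Int[OF assms, symmetric]
    using assms by (simp add: card_image inj_on_subset)
qed

lemma density_seq_color_class_image:
  assumes "inj f"
  shows "density_seq (f ` V) (map_prod f f ` E) (f x) (color_class (f ` V) l c) =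
         density_seq V E x (color_class V (l \<circ> f) c)"
proof -
  have "color_class (f ` V) l c = f ` color_class V (l \<circ> f) c"
    unfolding color_class_def by auto
  then show ?thesis by (simp add: density_seq_image[OF assms])
qed

lemma automorphism_image_iff:
  assumes f: "inj f" and commute: "\<And>x. x \<in> V \<Longrightarrow> g' (f x) = f (g x)"
  shows "automorphism (f ` V) (map_prod f f ` E) g' \<longleftrightarrow> automorphism V E g"
proof -
  have f_bij: "bij_betw f V (f ` V)"
    using inj_on_imp_bij_betw inj_on_subset[OF f subset_UNIV] .
  have "bij_betw g' (f ` V) (f ` V) \<longleftrightarrow> bij_betw (g' \<circ> f) V (f ` V)"
    using bij_betw_comp_iff[OF f_bij] .
  also have "\<dots> \<longleftrightarrow> bij_betw (f \<circ> g) V (f ` V)"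
    by (rule bij_betw_cong) (simp add: commute)
  also have "\<dots> \<longleftrightarrow> bij_betw g V V"
  proof -
    have "inj_on (f \<circ> g) V \<longleftrightarrow> inj_on g V"
      using f by (auto simp: inj_on_def dest: injD)
    moreover have "(f \<circ> g) ` V = f ` V \<longleftrightarrow> g ` V = V"
      using f by (metis image_comp inj_image_eq_iff)
    ultimately show ?thesis
      unfolding bij_betw_def by blast
  qed
  finally have "bij_betw g' (f ` V) (f ` V) \<longleftrightarrow> bij_betw g V V" .
  moreover have
    "(\<forall>x\<in>f ` V. \<forall>y\<in>f ` V. (x, y) \<in> map_prod f f ` E \<longleftrightarrow> (g' x, g' y) \<in> map_prod f f ` E) \<longleftrightarrow>
     (\<forall>x\<in>V. \<forall>y\<in>V. (x, y) \<in> E \<longleftrightarrow> (g x, g y) \<in> E)"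
    by (simp add: commute map_prod_image_mem_iff[OF f])
  ultimately show ?thesis
    unfolding automorphism_def by (rule conj_cong)
qed

lemma distinguishing_comp_if_distinguishing_image:
  assumes f: "inj f" and dist: "distinguishing (f ` V) (map_prod f f ` E) l"
  shows "distinguishing V E (l \<circ> f)"
  unfolding distinguishing_def
proof (intro allI impI)
  fix g assume g: "automorphism V E g \<and> (\<forall>x\<in>V. (l \<circ> f) (g x) = (l \<circ> f) x)"
  define g' where "g' = f \<circ> g \<circ> inv f"
  have commute: "g' (f x) = f (g x)" for x
    unfolding g'_def using f by simp
  then have "automorphism (f ` V) (map_prod f f ` E) g'"
    using automorphism_image_iff[OF f] g by blast
  moreover have "\<forall>y\<in>f ` V. l (g' y) = l y"
    using g commute by auto
  ultimately have "\<forall>y\<in>f ` V. g' y = y"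
    using dist unfolding distinguishing_def by blast
  then show "\<forall>x\<in>V. g x = x"
    using commute f by (auto dest: injD)
qed

lemma distinguishing_image_if_distinguishing_comp:
  assumes f: "inj f" and dist: "distinguishing V E (l \<circ> f)"
  shows "distinguishing (f ` V) (map_prod f f ` E) l"
  unfolding distinguishing_def
proof (intro allI impI)
  fix g' assume g': "automorphism (f ` V) (map_prod f f ` E) g' \<and> (\<forall>y\<in>f ` V. l (g' y) = l y)"
  define g where "g = inv f \<circ> g' \<circ> f"
  have "g' ` f ` V \<subseteq> f ` V"
    using g' unfolding automorphism_def bij_betw_def by blast
  then have commute: "g' (f x) = f (g x)" if "x \<in> V" for x
  proof -
    have "g' (f x) \<in> range f"
      using that \<open>g' ` f ` V \<subseteq> f ` V\<close> by blast
    then show ?thesis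
      unfolding g_def comp_apply by (rule f_inv_into_f[symmetric])
  qed
  then have "automorphism V E g"
    using automorphism_image_iff[OF f] g' by blast
  moreover have "\<forall>x\<in>V. (l \<circ> f) (g x) = (l \<circ> f) x"
  proof
    fix x assume "x \<in> V"
    then have "l (g' (f x)) = l (f x)"
      using g' by blast
    then show "(l \<circ> f) (g x) = (l \<circ> f) x"
      using commute[OF \<open>x \<in> V\<close>] by simp
  qed
  ultimately have "\<forall>x\<in>V. g x = x"
    using dist unfolding distinguishing_def by blast
  then show "\<forall>y\<in>f ` V. g' y = y"
    using commute by auto
qed

lemma distinguishing_image_iff:
  "inj f \<Longrightarrow> distinguishing (f ` V) (map_prod f f ` E) l \<longleftrightarrow> distinguishing V E (l \<circ> f)"
  using distinguishing_comp_if_distinguishing_image distinguishing_image_if_distinguishing_comp by blast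

lemma dist_density_zero_at_image:
  assumes f: "inj f" and "dist_density_zero_at V E x"
  shows "dist_density_zero_at (f ` V) (map_prod f f ` E) (f x)"
proof -
  obtain l where l: "distinguishing V E l" "density_zero_at_col V E x l"
    using assms(2) unfolding dist_density_zero_at_def by blast
  have inv: "l \<circ> inv f \<circ> f = l"
    using f by (simp add: fun_eq_iff)
  have "distinguishing (f ` V) (map_prod f f ` E) (l \<circ> inv f)"
    using l(1) by (simp add: distinguishing_image_iff[OF f] inv)
  moreover have "density_zero_at_col (f ` V) (map_prod f f ` E) (f x) (l \<circ> inv f)"
    using l(2) by (simp add: density_zero_at_col_def density_seq_color_class_image[OF f] inv)
  ultimately show ?thesis
    unfolding dist_density_zero_at_def by blast
qed

section \<open>Distances, automorphisms and densities\<close>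

lemma relpow_imp_level_le:
  assumes "lvl c = 0" and "\<And>x y. (x, y) \<in> E \<Longrightarrow> lvl y \<le> Suc (lvl x)"
  shows "(c, x) \<in> E ^^ n \<Longrightarrow> lvl x \<le> n"
proof (induction n arbitrary: x)
  case 0
  then show ?case using assms(1) by simp
next
  case (Suc n)
  then obtain y where "(c, y) \<in> E ^^ n" "(y, x) \<in> E" by auto
  then show ?case using Suc.IH assms(2) by fastforce
qed

lemma level_imp_relpow:
  assumes "E \<subseteq> V \<times> V"
    and "\<And>x. x \<in> V \<Longrightarrow> lvl x = 0 \<Longrightarrow> x = c"
    and "\<And>x. x \<in> V \<Longrightarrow> 0 < lvl x \<Longrightarrow> \<exists>y. (y, x) \<in> E \<and> Suc (lvl y) = lvl x"
  shows "x \<in> V \<Longrightarrow> (c, x) \<in> E ^^ lvl x"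
proof (induction "lvl x" arbitrary: x)
  case 0
  then show ?case using assms(2) by simp
next
  case (Suc m)
  then obtain y where y: "(y, x) \<in> E" "Suc (lvl y) = lvl x"
    using assms(3) by (metis zero_less_Suc)
  then have "(c, y) \<in> E ^^ lvl y"
    using Suc assms(1) by auto
  then show ?case using y by (metis relpow_Suc_I)
qed

lemma ball_graph_eq_level:
  assumes "E \<subseteq> V \<times> V" "lvl c = 0"
    and "\<And>x y. (x, y) \<in> E \<Longrightarrow> lvl y \<le> Suc (lvl x)"
    and "\<And>x. x \<in> V \<Longrightarrow> lvl x = 0 \<Longrightarrow> x = c"
    and "\<And>x. x \<in> V \<Longrightarrow> 0 < lvl x \<Longrightarrow> \<exists>y. (y, x) \<in> E \<and> Suc (lvl y) = lvl x"
  shows "ball_graph V E c n = {x \<in> V. lvl x \<le> n}"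
  unfolding ball_graph_def
  using relpow_imp_level_le[of lvl c E, OF assms(2,3)] level_imp_relpow[of E V lvl c, OF assms(1,4,5)]
  by (auto intro: le_trans)

lemma automorphism_relpow_iff:
  assumes g: "automorphism V E g" and E: "E \<subseteq> V \<times> V" and "x \<in> V" "y \<in> V"
  shows "(g x, g y) \<in> E ^^ n \<longleftrightarrow> (x, y) \<in> E ^^ n"
  using assms(4)
proof (induction n arbitrary: y)
  case 0
  then show ?case
    using g \<open>x \<in> V\<close> unfolding automorphism_def bij_betw_def by (auto dest: inj_onD)
next
  case (Suc n)
  have gV: "g ` V = V" and gE: "\<forall>x\<in>V. \<forall>y\<in>V. (x, y) \<in> E \<longleftrightarrow> (g x, g y) \<in> E"
    using g unfolding automorphism_def bij_betw_def by auto
  have "(g x, g y) \<in> E ^^ Suc n \<longleftrightarrow> (\<exists>w. (g x, w) \<in> E ^^ n \<and> (w, g y) \<in> E)"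
    by auto
  also have "\<dots> \<longleftrightarrow> (\<exists>z\<in>V. (g x, g z) \<in> E ^^ n \<and> (g z, g y) \<in> E)"
  proof
    assume "\<exists>w. (g x, w) \<in> E ^^ n \<and> (w, g y) \<in> E"
    then obtain w where w: "(g x, w) \<in> E ^^ n" "(w, g y) \<in> E" by blast
    then have "w \<in> g ` V"
      using E gV by auto
    then show "\<exists>z\<in>V. (g x, g z) \<in> E ^^ n \<and> (g z, g y) \<in> E"
      using w by blast
  qed blast
  also have "\<dots> \<longleftrightarrow> (\<exists>z\<in>V. (x, z) \<in> E ^^ n \<and> (z, y) \<in> E)"
    using Suc gE by auto
  also have "\<dots> \<longleftrightarrow> (x, y) \<in> E ^^ Suc n"
    using E by (auto 0 3 intro: relpow_Suc_I)
  finally show ?case .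
qed

lemma automorphism_ball_graph_iff:
  assumes "automorphism V E g" "E \<subseteq> V \<times> V" "c \<in> V" "x \<in> V"
  shows "g x \<in> ball_graph V E (g c) n \<longleftrightarrow> x \<in> ball_graph V E c n"
proof -
  have "g x \<in> V"
    using assms(1,4) unfolding automorphism_def bij_betw_def by auto
  then show ?thesis
    unfolding ball_graph_def using automorphism_relpow_iff[OF assms(1,2,3,4)] assms(4) by auto
qed

lemma distinguishing_twins:
  assumes l: "distinguishing V E l" and E: "E \<subseteq> V \<times> V" and ab: "a \<in> V" "b \<in> V" "a \<noteq> b"
    and out: "\<And>y. (a, y) \<in> E \<longleftrightarrow> (b, y) \<in> E" and into: "\<And>y. (y, a) \<in> E \<longleftrightarrow> (y, b) \<in> E"
  shows "l a \<noteq> l b"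
proof
  assume same: "l a = l b"
  define g where "g x = (if x = a then b else if x = b then a else x)" for x
  have g_simps: "g a = b" "g b = a" "\<And>x. x \<noteq> a \<Longrightarrow> x \<noteq> b \<Longrightarrow> g x = x"
    unfolding g_def by auto
  have "bij_betw g V V"
    unfolding bij_betw_def inj_on_def g_def using ab by auto
  moreover have "(g x, g y) \<in> E \<longleftrightarrow> (x, y) \<in> E" for x y
  proof -
    have "(g x, g y) \<in> E \<longleftrightarrow> (x, g y) \<in> E"
      using out g_simps by (cases "x = a \<or> x = b") auto
    also have "\<dots> \<longleftrightarrow> (x, y) \<in> E"
      using into g_simps by (cases "y = a \<or> y = b") auto
    finally show ?thesis .
  qed
  ultimately have "automorphism V E g"
    unfolding automorphism_def by simp
  moreover have "\<forall>x\<in>V. l (g x) = l x"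
    using same g_simps by (metis (full_types))
  ultimately have "g a = a"
    using l ab unfolding distinguishing_def by blast
  then show False
    using g_simps ab by simp
qed

lemma density_seq_le_1: "density_seq V E x W n \<le> 1"
proof (cases "finite (ball_graph V E x n)")
  case True
  then have "card (ball_graph V E x n \<inter> W) \<le> card (ball_graph V E x n)"
    by (intro card_mono) auto
  then show ?thesis
    unfolding density_seq_def by (cases "card (ball_graph V E x n) = 0") auto
qed (simp add: density_seq_def)

lemma density_seq_color_class_complement:
  assumes "x \<in> V" "finite (ball_graph V E x n)"
  shows "density_seq V E x (color_class V l False) n = 1 - density_seq V E x (color_class V l True) n"
proof -
  let ?B = "ball_graph V E x n"
  have "x \<in> ?B"
    using assms(1) unfolding ball_graph_def by force
  then have pos: "card ?B > 0"
    using assms(2) card_gt_0_iff by blast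
  have "?B = (?B \<inter> color_class V l True) \<union> (?B \<inter> color_class V l False)"
    unfolding ball_graph_def color_class_def by auto
  moreover have "(?B \<inter> color_class V l True) \<inter> (?B \<inter> color_class V l False) = {}"
    unfolding color_class_def by auto
  ultimately have "card ?B = card (?B \<inter> color_class V l True) + card (?B \<inter> color_class V l False)"
    using assms(2) by (metis card_Un_disjoint finite_Int)
  then have "real (card (?B \<inter> color_class V l False)) = real (card ?B) - real (card (?B \<inter> color_class V l True))"
    by simp
  then show ?thesis
    unfolding density_seq_def using pos by (simp add: diff_divide_distrib)
qed

lemma not_density_zero_at_col_if_densities_ge:
  assumes "0 < \<epsilon>" and "\<And>c a. density_seq V E v (color_class V l c) \<longlonglongrightarrow> a \<Longrightarrow> \<epsilon> \<le> a"
  shows "\<not> density_zero_at_col V E v l"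
  using assms unfolding density_zero_at_col_def by (metis min_def order.strict_iff_not)

lemma not_dist_density_zero_if_densities_ge:
  assumes v: "v \<in> V" and "0 < \<epsilon>"
    and ge: "\<And>l c a. distinguishing V E l \<Longrightarrow> density_seq V E v (color_class V l c) \<longlonglongrightarrow> a \<Longrightarrow> \<epsilon> \<le> a"
  shows "\<not> dist_density_zero V E"
proof
  assume "dist_density_zero V E"
  then obtain l where l: "distinguishing V E l" and zero: "density_zero_col V E l"
    unfolding dist_density_zero_def by blast
  define \<delta> where "\<delta> c x = lim (density_seq V E x (color_class V l c))" for c x
  have lim: "density_seq V E x (color_class V l c) \<longlonglongrightarrow> \<delta> c x" if "x \<in> V" for c x
    using zero that unfolding density_zero_col_def \<delta>_def
    by (cases c) (auto simp: convergent_LIMSEQ_iff)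
  have "\<epsilon> \<le> (SUP x\<in>V. \<delta> c x)" for c
  proof -
    have "\<delta> c x \<le> 1" if "x \<in> V" for x
      by (rule LIMSEQ_le_const2[OF lim[OF that]]) (simp add: density_seq_le_1)
    then have "bdd_above (\<delta> c ` V)"
      by (rule bdd_aboveI2)
    then have "\<delta> c v \<le> (SUP x\<in>V. \<delta> c x)"
      by (rule cSUP_upper[OF v])
    then show ?thesis
      using ge[OF l lim[OF v], of c] by linarith
  qed
  moreover have "min (SUP x\<in>V. \<delta> True x) (SUP x\<in>V. \<delta> False x) = 0"
    using zero unfolding density_zero_col_def \<delta>_def by blast
  ultimately show False
    using \<open>0 < \<epsilon>\<close> by (metis min_def not_le)
qed

section \<open>The example graph\<close>

lemma bit_imp_less_of_less_exp: "(x::nat) < 2 ^ n \<Longrightarrow> bit x i \<Longrightarrow> i < n"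
  by (metis bit_take_bit_iff take_bit_nat_eq_self)

lemma exists_bit_of_nonzero: "(x::nat) \<noteq> 0 \<Longrightarrow> \<exists>i. bit x i"
  using bit_eq_iff[of x 0] by auto

lemma eq_of_less_exp_of_bits_eq:
  "(x::nat) < 2 ^ n \<Longrightarrow> y < 2 ^ n \<Longrightarrow> (\<And>i. i < n \<Longrightarrow> bit x i = bit y i) \<Longrightarrow> x = y"
  by (metis bit_eq_iff bit_imp_less_of_less_exp)

fun layer_size :: "nat \<Rightarrow> nat" where
  "layer_size 0 = 1"
| "layer_size (Suc 0) = 2"
| "layer_size (Suc (Suc k)) = 2 ^ layer_size (Suc k) - 1"

lemma add_2_le_exp: "2 \<le> (x::nat) \<Longrightarrow> x + 2 \<le> 2 ^ x"
  by (induction x rule: dec_induct) simp_all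

lemma double_Suc_le_exp: "3 \<le> (x::nat) \<Longrightarrow> 2 * x + 1 \<le> 2 ^ x"
  by (induction x rule: dec_induct) simp_all

lemma layer_size_Suc_ge: "2 \<le> layer_size (Suc k) \<and> Suc (layer_size k) \<le> layer_size (Suc k)"
proof (induction k)
  case (Suc k)
  then have "layer_size (Suc k) + 2 \<le> 2 ^ layer_size (Suc k)"
    using add_2_le_exp by blast
  then show ?case
    using Suc by (simp only: layer_size.simps) linarith
qed simp

lemma Suc_le_layer_size: "Suc k \<le> layer_size k"
  by (induction k) (use layer_size_Suc_ge in \<open>auto intro: le_trans\<close>)

lemma sum_layer_size_le_next: "(\<Sum>k\<le>m. layer_size k) \<le> layer_size (Suc m)"
proof (induction m)
  case (Suc m)
  show ?case
  proof (cases m)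
    case (Suc m')
    have "3 \<le> layer_size (Suc m)"
      using Suc_le_layer_size[of "Suc m"] Suc by simp
    then have "2 * layer_size (Suc m) + 1 \<le> 2 ^ layer_size (Suc m)"
      by (rule double_Suc_le_exp)
    then show ?thesis using Suc.IH by simp
  qed (simp add: numeral_eq_Suc)
qed simp

lemma sum_layer_size_le_double: "(\<Sum>k\<le>m. layer_size k) \<le> 2 * layer_size m"
  by (cases m) (use sum_layer_size_le_next in auto)

lemma layer_size_bound:
  assumes "j < layer_size (Suc k)" "0 < k"
  shows "j + 1 < 2 ^ layer_size k"
  using assms by (cases k) auto

text \<open>\<open>Node s k j c\<close> is vertex \<open>j < layer_size k\<close> of level \<open>k\<close> on side \<open>s\<close>; the flag
  \<open>c\<close> tells twins apart, which exist only on side \<open>True\<close> from level 2 on.  From level 1 on,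
  vertex \<open>j\<close> of level \<open>k + 1\<close> lies below exactly the vertices \<open>i\<close> of level \<open>k\<close> with
  \<open>bit (j + 1) i\<close>.  The pendant \<open>Apex\<close>, the only vertex of degree one, is fixed by every
  automorphism.\<close>
datatype vertex = Apex | Hub | Node bool nat nat bool

abbreviation root :: "bool \<Rightarrow> vertex" where
  "root s \<equiv> Node s 0 0 True"

definition vertices :: "vertex set" where
  "vertices = {Apex, Hub} \<union>
     {Node s k j c | s k j c. j < layer_size k \<and> (c \<or> (s \<and> 2 \<le> k))}"

fun below :: "vertex \<Rightarrow> vertex \<Rightarrow> bool" where
  "below Apex Hub = True"
| "below Hub (Node s k j c) = (k = 0)"
| "below (Node s k i c) (Node s' k' j c') = (s = s' \<and> k' = Suc k \<and> (k = 0 \<or> bit (j + 1) i))"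
| "below _ _ = False"

definition edges :: "(vertex \<times> vertex) set" where
  "edges = {(x, y). x \<in> vertices \<and> y \<in> vertices \<and> (below x y \<or> below y x)}"

lemma mem_vertices [simp]:
  "Apex \<in> vertices" "Hub \<in> vertices"
  "Node s k j c \<in> vertices \<longleftrightarrow> j < layer_size k \<and> (c \<or> (s \<and> 2 \<le> k))"
  unfolding vertices_def by auto

lemma mem_edges: "(x, y) \<in> edges \<longleftrightarrow> x \<in> vertices \<and> y \<in> vertices \<and> (below x y \<or> below y x)"
  unfolding edges_def by auto

lemma edges_subset: "edges \<subseteq> vertices \<times> vertices"
  unfolding edges_def by auto

lemma sym_edges: "sym edges"
  unfolding sym_def by (auto simp: mem_edges)

lemma below_cases:
  "below x y \<Longrightarrow> (x = Apex \<and> y = Hub) \<or> (\<exists>s j c. x = Hub \<and> y = Node s 0 j c) \<or>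
     (\<exists>s k i c j c'. x = Node s k i c \<and> y = Node s (Suc k) j c' \<and> (k = 0 \<or> bit (j + 1) i))"
  by (cases x; cases y) auto

lemma exists_below:
  assumes "x \<in> vertices" "x \<noteq> Apex"
  obtains y where "y \<in> vertices" "below y x"
proof (cases x)
  case Hub
  then show ?thesis using that[of Apex] by simp
next
  case (Node s k j c)
  show ?thesis
  proof (cases k)
    case 0
    then show ?thesis using that[of Hub] Node by simp
  next
    case (Suc k')
    show ?thesis
    proof (cases k')
      case 0
      then show ?thesis using that[of "root s"] Node Suc by simp
    next
      case (Suc k'')
      have "j + 1 < 2 ^ layer_size k'"
        using assms layer_size_bound Node \<open>k = Suc k'\<close> Suc by simp
      moreover obtain i where "bit (j + 1) i"
        using exists_bit_of_nonzero[of "j + 1"] by auto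
      ultimately show ?thesis
        using that[of "Node s k' i True"] bit_imp_less_of_less_exp Node \<open>k = Suc k'\<close> by auto
    qed
  qed
qed (use assms in simp)

fun apex_dist :: "vertex \<Rightarrow> nat" where
  "apex_dist Apex = 0"
| "apex_dist Hub = 1"
| "apex_dist (Node s k j c) = k + 2"

fun root_dist :: "bool \<Rightarrow> vertex \<Rightarrow> nat" where
  "root_dist t Apex = 2"
| "root_dist t Hub = 1"
| "root_dist t (Node s k j c) = (if s = t then k else k + 2)"

lemma below_apex_dist: "below x y \<Longrightarrow> apex_dist y = Suc (apex_dist x)"
  using below_cases[of x y] by auto

lemma below_root_dist: "below x y \<Longrightarrow> root_dist t y = Suc (root_dist t x) \<or> root_dist t x = Suc (root_dist t y)"
  using below_cases[of x y] by (auto split: if_splits)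

lemma ball_apex: "ball_graph vertices edges Apex n = {x \<in> vertices. apex_dist x \<le> n}"
proof (rule ball_graph_eq_level[OF edges_subset])
  show "apex_dist y \<le> Suc (apex_dist x)" if "(x, y) \<in> edges" for x y
    using that below_apex_dist[of x y] below_apex_dist[of y x] unfolding mem_edges by auto
  show "x = Apex" if "x \<in> vertices" "apex_dist x = 0" for x
    using that by (cases x) auto
  show "\<exists>y. (y, x) \<in> edges \<and> Suc (apex_dist y) = apex_dist x"
    if x: "x \<in> vertices" "0 < apex_dist x" for x
  proof -
    have "x \<noteq> Apex"
      using x by auto
    then obtain y where "y \<in> vertices" "below y x"
      using exists_below x(1) by blast
    then show ?thesis
      using x below_apex_dist by (auto simp: mem_edges)
  qed
qed simp

lemma ball_root: "ball_graph vertices edges (root t) n = {x \<in> vertices. root_dist t x \<le> n}"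
proof (rule ball_graph_eq_level[OF edges_subset])
  show "root_dist t y \<le> Suc (root_dist t x)" if "(x, y) \<in> edges" for x y
    using that below_root_dist[of x y t] below_root_dist[of y x t] unfolding mem_edges by auto
  show "x = root t" if "x \<in> vertices" "root_dist t x = 0" for x
    using that by (cases x) (auto split: if_splits)
  show "\<exists>y. (y, x) \<in> edges \<and> Suc (root_dist t y) = root_dist t x"
    if x: "x \<in> vertices" "0 < root_dist t x" for x
  proof (cases x)
    case Apex
    then show ?thesis by (intro exI[of _ Hub]) (simp add: mem_edges)
  next
    case Hub
    then show ?thesis by (intro exI[of _ "root t"]) (simp add: mem_edges)
  next
    case (Node s k j c)
    then obtain y where y: "y \<in> vertices" "below y x"
      using exists_below x(1) by blast
    then have "Suc (root_dist t y) = root_dist t x"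
      using below_cases[of y x] x Node by (auto split: if_splits)
    then show ?thesis
      using x y by (auto simp: mem_edges)
  qed
qed simp

definition levels_upto :: "nat \<Rightarrow> vertex set" where
  "levels_upto n = {Apex, Hub} \<union>
     (\<lambda>((s, c), (k, j)). Node s k j c) ` (UNIV \<times> (SIGMA k:{..n}. {..<layer_size k}))"

lemma finite_levels_upto: "finite (levels_upto n)"
  unfolding levels_upto_def by (intro finite_UnI finite_imageI finite_cartesian_product finite_SigmaI) auto

lemma card_levels_upto_le: "card (levels_upto n) \<le> 2 + 8 * layer_size n"
proof -
  let ?I = "UNIV \<times> (SIGMA k:{..n}. {..<layer_size k}) :: ((bool \<times> bool) \<times> nat \<times> nat) set"
  have "card ?I = 4 * (\<Sum>k\<le>n. layer_size k)"
    by (simp add: card_cartesian_product card_SigmaI card_UNIV_bool flip: UNIV_Times_UNIV)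
  then have "card ((\<lambda>((s, c), (k, j)). Node s k j c) ` ?I) \<le> 4 * (\<Sum>k\<le>n. layer_size k)"
    by (metis card_image_le finite_SigmaI finite_atMost finite_cartesian_product finite_lessThan finite)
  then have "card (levels_upto n) \<le> 2 + 4 * (\<Sum>k\<le>n. layer_size k)"
    unfolding levels_upto_def using card_Un_le[of "{Apex, Hub}"] by (simp add: card_insert_if)
  then show ?thesis
    using sum_layer_size_le_double[of n] by linarith
qed

lemma mem_levels_upto:
  assumes "x \<in> vertices" "root_dist t x \<le> n \<or> apex_dist x \<le> n"
  shows "x \<in> levels_upto n"
proof (cases x)
  case (Node s k j c)
  then have "k \<le> n" "j < layer_size k"
    using assms by (auto split: if_splits)
  then show ?thesis
    unfolding levels_upto_def Node by (intro UnI2 image_eqI[where x = "((s, c), (k, j))"]) auto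
qed (auto simp: levels_upto_def)

lemma finite_ball_root: "finite (ball_graph vertices edges (root t) n)"
  by (rule finite_subset[OF _ finite_levels_upto[of n]]) (auto simp: ball_root intro: mem_levels_upto)

lemma card_ball_root_le: "card (ball_graph vertices edges (root t) n) \<le> 2 + 8 * layer_size n"
  by (rule order_trans[OF card_mono card_levels_upto_le])
    (auto simp: finite_levels_upto ball_root intro: mem_levels_upto)

lemma layer_size_le_card_ball_root: "layer_size n \<le> card (ball_graph vertices edges (root t) n)"
proof -
  have "(\<lambda>j. Node t n j True) ` {..<layer_size n} \<subseteq> ball_graph vertices edges (root t) n"
    unfolding ball_root by auto
  then have "card ((\<lambda>j. Node t n j True) ` {..<layer_size n}) \<le> card (ball_graph vertices edges (root t) n)"
    using finite_ball_root by (rule card_mono[rotated])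
  then show ?thesis
    by (simp add: card_image inj_on_def)
qed

lemma simple_graph_vertices: "simple_graph vertices edges"
proof -
  have "\<not> below x x" for x
    by (metis below_apex_dist n_not_Suc_n)
  then show ?thesis
    unfolding simple_graph_def using edges_subset sym_edges by (auto simp: mem_edges)
qed

lemma connected_graph_vertices: "connected_graph vertices edges"
proof -
  have "(Apex, x) \<in> edges\<^sup>*" if "x \<in> vertices" for x
  proof -
    have "x \<in> ball_graph vertices edges Apex (apex_dist x)"
      using that by (simp add: ball_apex)
    then show ?thesis
      unfolding ball_graph_def using relpow_imp_rtrancl by blast
  qed
  moreover have "(x, y) \<in> edges\<^sup>* \<Longrightarrow> (y, x) \<in> edges\<^sup>*" for x y
    by (metis rtrancl_converseI sym_edges sym_conv_converse_eq)
  ultimately show ?thesis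
    unfolding connected_graph_def by (meson rtrancl_trans)
qed

lemma locally_finite_vertices: "locally_finite vertices edges"
  unfolding locally_finite_def
proof
  fix x assume "x \<in> vertices"
  have "{y. (x, y) \<in> edges} \<subseteq> levels_upto (Suc (apex_dist x))"
  proof
    fix y assume "y \<in> {y. (x, y) \<in> edges}"
    then have "y \<in> vertices" "apex_dist y \<le> Suc (apex_dist x)"
      using below_apex_dist[of x y] below_apex_dist[of y x] by (auto simp: mem_edges)
    then show "y \<in> levels_upto (Suc (apex_dist x))"
      using mem_levels_upto by blast
  qed
  then show "finite {y. (x, y) \<in> edges}"
    using finite_levels_upto finite_subset by blast
qed

section \<open>A distinguishing colouring and the densities at the roots\<close>

lemma neighbour_Apex: "(Apex, z) \<in> edges \<Longrightarrow> z = Hub"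
  unfolding mem_edges using below_cases[of Apex z] below_cases[of z Apex] by auto

lemma two_neighbours:
  assumes x: "x \<in> vertices" "x \<noteq> Apex"
  obtains y1 y2 where "y1 \<noteq> y2" "(x, y1) \<in> edges" "(x, y2) \<in> edges"
proof (cases x)
  case Hub
  then show ?thesis
    using that[of Apex "root False"] by (simp add: mem_edges)
next
  case (Node s k j c)
  let ?up = "Node s (Suc k) (2 ^ j - 1) True"
  have "j < layer_size k"
    using x Node by simp
  then have "?up \<in> vertices"
    by (cases k) (auto simp: diff_less_mono less_imp_le_nat)
  moreover have "below x ?up"
    using Node by (simp add: bit_exp_iff)
  moreover obtain y where y: "y \<in> vertices" "below y x"
    using exists_below x by blast
  moreover have "apex_dist y < apex_dist ?up"
    using below_apex_dist[OF y(2)] Node by simp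
  then have "y \<noteq> ?up"
    by auto
  ultimately show ?thesis
    using that[of y ?up] x by (auto simp: mem_edges)
qed (use x in simp)

lemma automorphism_fixes_Apex:
  assumes g: "automorphism vertices edges g"
  shows "g Apex = Apex"
proof (rule ccontr)
  have bij: "bij_betw g vertices vertices"
    and gE: "\<forall>x\<in>vertices. \<forall>y\<in>vertices. (x, y) \<in> edges \<longleftrightarrow> (g x, g y) \<in> edges"
    using g unfolding automorphism_def by auto
  assume "g Apex \<noteq> Apex"
  moreover have "g Apex \<in> vertices"
    using bij by (simp add: bij_betw_apply)
  ultimately obtain y1 y2 where y: "y1 \<noteq> y2" "(g Apex, y1) \<in> edges" "(g Apex, y2) \<in> edges"
    using two_neighbours by blast
  then obtain z1 z2 where "z1 \<in> vertices" "z2 \<in> vertices" "y1 = g z1" "y2 = g z2"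
    using edges_subset bij unfolding bij_betw_def by blast
  then have "z1 = Hub" "z2 = Hub"
    using y gE neighbour_Apex by auto
  then show False
    using y \<open>y1 = g z1\<close> \<open>y2 = g z2\<close> by simp
qed

lemma automorphism_apex_dist:
  assumes g: "automorphism vertices edges g" and x: "x \<in> vertices"
  shows "apex_dist (g x) = apex_dist x"
proof -
  have "g x \<in> vertices"
    using g x unfolding automorphism_def by (meson bij_betw_apply)
  moreover have "apex_dist (g x) \<le> n \<longleftrightarrow> apex_dist x \<le> n" for n
    using automorphism_ball_graph_iff[OF g edges_subset _ x, of Apex n] x \<open>g x \<in> vertices\<close>
    by (simp add: ball_apex automorphism_fixes_Apex[OF g])
  ultimately show ?thesis
    by (meson le_antisym order_refl)
qed

lemma Node_determined_by_lower_neighbours: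
  assumes x: "Node s (Suc (Suc k)) j c \<in> vertices" and x': "Node s' (Suc (Suc k)) j' c' \<in> vertices"
    and same: "\<And>i. i < layer_size (Suc k) \<Longrightarrow>
      (Node s (Suc k) i True, Node s (Suc (Suc k)) j c) \<in> edges \<longleftrightarrow>
      (Node s (Suc k) i True, Node s' (Suc (Suc k)) j' c') \<in> edges"
  shows "s = s' \<and> j = j'"
proof -
  have lt: "j + 1 < 2 ^ layer_size (Suc k)" "j' + 1 < 2 ^ layer_size (Suc k)"
    using layer_size_bound x x' by auto
  have low: "(Node s (Suc k) i True, Node s (Suc (Suc k)) j c) \<in> edges \<longleftrightarrow> bit (j + 1) i"
    "(Node s (Suc k) i True, Node s' (Suc (Suc k)) j' c') \<in> edges \<longleftrightarrow> s = s' \<and> bit (j' + 1) i"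
    if "i < layer_size (Suc k)" for i
    using x x' that by (auto simp: mem_edges)
  obtain i where "bit (j + 1) i"
    using exists_bit_of_nonzero[of "j + 1"] by auto
  then have "s = s'"
    using same low bit_imp_less_of_less_exp[OF lt(1)] by blast
  moreover have "j + 1 = j' + 1"
    using eq_of_less_exp_of_bits_eq[OF lt] same low \<open>s = s'\<close> by blast
  ultimately show ?thesis by simp
qed

text \<open>Blue are \<open>root True\<close>, vertex 1 of level 1 on each side, and one twin of each pair:
  the two roots, the two vertices of a level 1 and twins are all the vertices that
  lower neighbours cannot tell apart.\<close>
fun sparse_coloring :: "vertex \<Rightarrow> bool" where
  "sparse_coloring Apex = False"
| "sparse_coloring Hub = False"
| "sparse_coloring (Node s k j c) = (if k = 0 then s else if k = 1 then j = 1 else s \<and> c)"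

lemma eq_of_same_lower_neighbours:
  assumes x: "x \<in> vertices" and x': "x' \<in> vertices" and dist: "apex_dist x = apex_dist x'"
    and col: "sparse_coloring x = sparse_coloring x'"
    and same: "\<And>y. y \<in> vertices \<Longrightarrow> apex_dist y < apex_dist x \<Longrightarrow> (y, x) \<in> edges \<longleftrightarrow> (y, x') \<in> edges"
  shows "x = x'"
proof (cases x)
  case (Node s k j c)
  then obtain s' j' c' where x'_eq: "x' = Node s' k j' c'"
    using dist by (cases x') auto
  consider "k = 0" | "k = 1" | k' where "k = Suc (Suc k')"
    by (metis One_nat_def not0_implies_Suc)
  then show ?thesis
  proof cases
    case 2
    have "(root s, x) \<in> edges"
      using x Node 2 by (simp add: mem_edges)
    then have "s = s'"
      using same[of "root s"] x'_eq Node 2 by (simp add: mem_edges)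
    then show ?thesis
      using x x' Node x'_eq col 2 by auto
  next
    case 3
    then have "s = s' \<and> j = j'"
      using Node_determined_by_lower_neighbours[of s k' j c s' j' c'] x x' same Node x'_eq by simp
    then show ?thesis
      using col x x' Node x'_eq 3 by (cases s) auto
  qed (use x x' Node x'_eq col in auto)
qed (use dist in \<open>cases x'; simp\<close>)+

lemma distinguishing_sparse_coloring: "distinguishing vertices edges sparse_coloring"
  unfolding distinguishing_def
proof (intro allI impI)
  fix g assume "automorphism vertices edges g \<and> (\<forall>x\<in>vertices. sparse_coloring (g x) = sparse_coloring x)"
  then have g: "automorphism vertices edges g" and col: "\<forall>x\<in>vertices. sparse_coloring (g x) = sparse_coloring x"
    by auto
  have gV: "g x \<in> vertices" if "x \<in> vertices" for x
    using g that unfolding automorphism_def by (meson bij_betw_apply)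
  have "g x = x" if "x \<in> vertices" for x
    using that
  proof (induction "apex_dist x" arbitrary: x rule: less_induct)
    case less
    have "(y, x) \<in> edges \<longleftrightarrow> (y, g x) \<in> edges" if "y \<in> vertices" "apex_dist y < apex_dist x" for y
      using less that g unfolding automorphism_def by metis
    then show ?case
      using eq_of_same_lower_neighbours[OF less.prems gV[OF less.prems]]
        automorphism_apex_dist[OF g less.prems] col less.prems by metis
  qed
  then show "\<forall>x\<in>vertices. g x = x" by blast
qed

lemma distinguishing_twin_Nodes:
  assumes l: "distinguishing vertices edges l" and "2 \<le> k" "j < layer_size k"
  shows "l (Node True k j True) \<noteq> l (Node True k j False)"
proof (rule distinguishing_twins[OF l edges_subset])
  have "below (Node True k j True) y = below (Node True k j False) y"
    "below y (Node True k j True) = below y (Node True k j False)" for y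
    by (cases y; simp)+
  then show "(Node True k j True, y) \<in> edges \<longleftrightarrow> (Node True k j False, y) \<in> edges"
    "(y, Node True k j True) \<in> edges \<longleftrightarrow> (y, Node True k j False) \<in> edges" for y
    using assms by (auto simp: mem_edges)
qed (use assms in auto)

lemma layer_size_le_card_color_ball_root_True:
  assumes l: "distinguishing vertices edges l" and n: "2 \<le> n"
  shows "layer_size n \<le> card (ball_graph vertices edges (root True) n \<inter> color_class vertices l c)"
proof -
  define pick where "pick j = (if l (Node True n j True) = c then Node True n j True else Node True n j False)" for j
  have "pick ` {..<layer_size n} \<subseteq> ball_graph vertices edges (root True) n \<inter> color_class vertices l c"
  proof
    fix x assume "x \<in> pick ` {..<layer_size n}"
    then obtain j where j: "j < layer_size n" "x = pick j" by blast
    then have "l x = c"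
      using distinguishing_twin_Nodes[OF l n j(1)] unfolding pick_def by (cases c) auto
    then show "x \<in> ball_graph vertices edges (root True) n \<inter> color_class vertices l c"
      using j n unfolding pick_def ball_root color_class_def by auto
  qed
  moreover have "inj_on pick {..<layer_size n}"
    unfolding pick_def by (rule inj_onI) (auto split: if_splits)
  ultimately show ?thesis
    by (metis card_image card_lessThan card_mono finite_Int finite_ball_root)
qed

lemma color_density_root_True_ge:
  assumes "distinguishing vertices edges l" "2 \<le> n"
  shows "1 / 10 \<le> density_seq vertices edges (root True) (color_class vertices l c) n"
proof -
  let ?B = "ball_graph vertices edges (root True) n"
  have "layer_size n \<le> card (?B \<inter> color_class vertices l c)"
    using layer_size_le_card_color_ball_root_True[OF assms] .
  moreover have "card ?B \<le> 2 + 8 * layer_size n"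
    by (rule card_ball_root_le)
  moreover have "1 \<le> layer_size n"
    using Suc_le_layer_size[of n] by simp
  moreover have "card (?B \<inter> color_class vertices l c) \<le> card ?B"
    by (rule card_mono) (auto simp: finite_ball_root)
  ultimately have "real (card ?B) \<le> 10 * real (card (?B \<inter> color_class vertices l c))" "0 < card ?B"
    by linarith+
  then show ?thesis
    unfolding density_seq_def by (simp add: field_simps)
qed

lemma color_density_root_True_limit_ge:
  assumes "distinguishing vertices edges l"
    and "density_seq vertices edges (root True) (color_class vertices l c) \<longlonglongrightarrow> a"
  shows "1 / 10 \<le> a"
  by (rule LIMSEQ_le_const[OF assms(2)]) (use color_density_root_True_ge[OF assms(1)] in blast)

lemma card_blue_ball_root_False_le:
  "card (ball_graph vertices edges (root False) (Suc (Suc m)) \<inter> color_class vertices sparse_coloring True)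
     \<le> 2 * layer_size (Suc m) + 1"
proof -
  let ?I = "UNIV \<times> (SIGMA k:{..m}. {..<layer_size k}) :: (bool \<times> nat \<times> nat) set"
  let ?near = "(\<lambda>(c, k, j). Node True k j c) ` ?I"
  let ?blue = "ball_graph vertices edges (root False) (Suc (Suc m)) \<inter> color_class vertices sparse_coloring True"
  have "?blue \<subseteq> insert (Node False 1 1 True) ?near"
  proof
    fix x assume "x \<in> ?blue"
    then have x: "x \<in> vertices" "root_dist False x \<le> Suc (Suc m)" "sparse_coloring x"
      unfolding ball_root color_class_def by auto
    then obtain s k j c where x_eq: "x = Node s k j c"
      by (cases x) auto
    show "x \<in> insert (Node False 1 1 True) ?near"
    proof (cases s)
      case True
      then have "(c, k, j) \<in> ?I"
        using x x_eq by simp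
      then show ?thesis
        using True x_eq by (auto intro!: image_eqI[where x = "(c, k, j)"])
    next
      case False
      then show ?thesis
        using x x_eq by (auto split: if_splits)
    qed
  qed
  then have "card ?blue \<le> card (insert (Node False 1 1 True) ?near)"
    by (rule card_mono[rotated]) simp
  also have "\<dots> \<le> Suc (card ?near)"
    by (simp add: card_insert_if)
  finally have "card ?blue \<le> Suc (card ?near)" .
  moreover have "card ?near \<le> card ?I"
    by (rule card_image_le) simp
  moreover have "card ?I = 2 * (\<Sum>k\<le>m. layer_size k)"
    by (simp add: card_cartesian_product card_SigmaI card_UNIV_bool)
  ultimately show ?thesis
    using sum_layer_size_le_next[of m] by linarith
qed

lemma exp_dominates_linear: "(2 * x + 1) * n \<le> 6 * (2 ^ x - 1)" if "n \<le> (x::nat)"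
proof -
  have "x * (2 * x + 1) + 6 \<le> 6 * 2 ^ x"
  proof (induction x)
    case (Suc x)
    have "x < 2 ^ x" by (rule less_exp)
    then show ?case using Suc.IH by (simp add: algebra_simps, linarith)
  qed simp
  moreover have "(2 * x + 1) * n \<le> x * (2 * x + 1)"
    using that by (metis mult.commute mult_le_mono2)
  ultimately show ?thesis
    by (simp add: diff_mult_distrib2)
qed

lemma blue_density_root_False_le:
  "density_seq vertices edges (root False) (color_class vertices sparse_coloring True) (Suc (Suc m))
     \<le> 6 / real (Suc (Suc m))"
proof -
  let ?n = "Suc (Suc m)" and ?x = "layer_size (Suc m)"
  let ?B = "ball_graph vertices edges (root False) ?n"
  let ?blue = "?B \<inter> color_class vertices sparse_coloring True"
  have "card ?blue * ?n \<le> (2 * ?x + 1) * ?n"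
    by (rule mult_le_mono1[OF card_blue_ball_root_False_le])
  also have "\<dots> \<le> 6 * (2 ^ ?x - 1)"
    by (rule exp_dominates_linear) (use Suc_le_layer_size[of "Suc m"] in linarith)
  also have "\<dots> = 6 * layer_size ?n"
    by (simp only: layer_size.simps)
  also have "\<dots> \<le> 6 * card ?B"
    using layer_size_le_card_ball_root[of ?n False] by simp
  finally have "real (card ?blue * ?n) \<le> real (6 * card ?B)"
    by (simp only: of_nat_le_iff)
  then have le: "real (card ?blue) * real ?n \<le> 6 * real (card ?B)"
    by (simp only: of_nat_mult of_nat_numeral)
  have "0 < card ?B"
    using layer_size_le_card_ball_root[of ?n False] Suc_le_layer_size[of ?n] by linarith
  then show ?thesis
    using le unfolding density_seq_def by (simp add: divide_simps mult.commute del: of_nat_Suc)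
qed

lemma blue_density_root_False_tendsto_0:
  "density_seq vertices edges (root False) (color_class vertices sparse_coloring True) \<longlonglongrightarrow> 0"
proof (rule tendsto_sandwich[of "\<lambda>_. 0" _ _ "\<lambda>n. 6 * (1 / real n)"])
  show "\<forall>\<^sub>F n in sequentially. 0 \<le> density_seq vertices edges (root False) (color_class vertices sparse_coloring True) n"
    by (simp add: density_seq_def)
  show "\<forall>\<^sub>F n in sequentially.
      density_seq vertices edges (root False) (color_class vertices sparse_coloring True) n \<le> 6 * (1 / real n)"
  proof (rule eventually_sequentiallyI[of 2])
    fix n :: nat assume "2 \<le> n"
    then obtain m where "n = Suc (Suc m)"
      by (metis add_2_eq_Suc le_Suc_ex)
    then show "density_seq vertices edges (root False) (color_class vertices sparse_coloring True) n \<le> 6 * (1 / real n)"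
      using blue_density_root_False_le[of m] by simp
  qed
  show "(\<lambda>n. 6 * (1 / real n)) \<longlonglongrightarrow> 0"
    using tendsto_mult_right_zero[OF lim_inverse_n', of 6] by simp
qed simp

lemma dist_density_zero_at_root_False: "dist_density_zero_at vertices edges (root False)"
proof -
  let ?blue = "density_seq vertices edges (root False) (color_class vertices sparse_coloring True)"
  have "density_seq vertices edges (root False) (color_class vertices sparse_coloring False) = (\<lambda>n. 1 - ?blue n)"
    by (rule ext, rule density_seq_color_class_complement) (simp_all add: finite_ball_root)
  moreover have "(\<lambda>n. 1 - ?blue n) \<longlonglongrightarrow> 1 - 0"
    by (intro tendsto_diff tendsto_const blue_density_root_False_tendsto_0)
  ultimately have "density_zero_at_col vertices edges (root False) sparse_coloring"
    unfolding density_zero_at_col_def using blue_density_root_False_tendsto_0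
    by (intro exI[of _ 0] exI[of _ 1]) simp
  then show ?thesis
    unfolding dist_density_zero_at_def using distinguishing_sparse_coloring by blast
qed

instance vertex :: countable
  by countable_datatype

theorem mainTheorem2:
  shows "\<exists>(V :: nat set) E v v'.
     simple_graph V E \<and> countable V \<and> connected_graph V E \<and> locally_finite V E \<and>
     v \<in> V \<and> v' \<in> V \<and>
     dist_density_zero_at V E v \<and>
     \<not> dist_density_zero V E \<and>
     (\<forall>l. distinguishing V E l \<longrightarrow> \<not> density_zero_at_col V E v' l)"
proof -
  let ?f = "to_nat :: vertex \<Rightarrow> nat"
  let ?V = "?f ` vertices" and ?E = "map_prod ?f ?f ` edges"
  have f: "inj ?f"
    by (rule inj_to_nat)
  have ge: "1 / 10 \<le> a"
    if "distinguishing ?V ?E l" "density_seq ?V ?E (?f (root True)) (color_class ?V l c) \<longlonglongrightarrow> a" for l c a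
    using that color_density_root_True_limit_ge
    by (simp add: distinguishing_image_iff[OF f] density_seq_color_class_image[OF f])
  show ?thesis
  proof (intro exI conjI allI impI)
    show "simple_graph ?V ?E" "connected_graph ?V ?E" "locally_finite ?V ?E"
      using f simple_graph_vertices connected_graph_vertices locally_finite_vertices
      by (simp_all add: simple_graph_image connected_graph_image locally_finite_image)
    show "dist_density_zero_at ?V ?E (?f (root False))"
      by (rule dist_density_zero_at_image[OF f dist_density_zero_at_root_False])
    show "\<not> dist_density_zero ?V ?E"
      by (rule not_dist_density_zero_if_densities_ge[OF _ _ ge]) simp_all
    show "\<not> density_zero_at_col ?V ?E (?f (root True)) l" if "distinguishing ?V ?E l" for l
      by (rule not_density_zero_at_col_if_densities_ge[OF _ ge[OF that]]) simp
  qed simp_all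
qed

end
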